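(* Let $s=0$ and $\lambda\in\mathbb{C}$. The space of even superderivations of $\mathfrak{L}^0_\lambda$ of degree $0$ equals $$\mathrm{span}_{\mathbb{C}}\{\mathrm{ad}\,L_0,\ \mathrm{ad}\,I_0\}\oplus\mathbb{C}\,\partial_G\oplus\delta_{\lambda,0}\,\mathbb{C}\,\partial_D,$$ where the last summand is $\mathbb{C}\partial_D$ if $\lambda=0$ and $\{0\}$ if $\lambda\neq0$. In particular $\partial_G$ is a superderivation for every $\lambda$, and $\partial_D$ is a superderivation when $\lambda=0$.
   Context: For $s\in\{0,\tfrac12\}$ and $\lambda\in\mathbb{C}$, $\mathfrak{L}^s_\lambda$ is the complex Lie superalgebra with basis $\{L_m,I_m,G_p,H_p : m\in\mathbb{Z},\ p\in s+\mathbb{Z}\}$, even part spanned by the $L_m,I_m$, odd part spanned by the $G_p,H_p$, and brackets $[L_m,L_n]=(m-n)L_{m+n}$, $[L_m,I_n]=(m-n)I_{m+n}$, $[L_m,H_p]=(\tfrac m2-p)H_{m+p}$, $[L_m,G_p]=(\tfrac m2-p)G_{m+p}+\lambda(m+1)H_{m+p}$, $[I_m,G_p]=(m-2p)H_{m+p}$, $[G_p,G_q]=I_{p+q}$, plus those given by super-antisymmetry $[y,x]=-(-1)^{|x||y|}[x,y]$; all other brackets of basis elements are zero. $\mathfrak{L}_r$ is spanned by basis elements of index $r$. A superderivation of parity $a$ is a linear map $D$ shifting parity by $a$ with $D([x,y])=[D(x),y]+(-1)^{a|x|}[x,D(y)]$; it has degree $r$ if $D(\mathfrak{L}_q)\subset\mathfrak{L}_{q+r}$.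 $\mathrm{ad}\,x(y)=[x,y]$. The linear maps $\partial_G,\partial_D$ are defined by $\partial_G(L_m)=\partial_G(I_m)=\partial_G(H_p)=0$, $\partial_G(G_p)=H_p$; $\partial_D(L_m)=0$, $\partial_D(I_m)=2I_m$, $\partial_D(G_p)=G_p$, $\partial_D(H_p)=3H_p$. *)

theory Defs
  imports Complex_Main
begin

text \<open>Basis of the Lie superalgebra L^0_lambda (s = 0, so all indices are integers).\<close>
datatype basis = L int | I int | G int | H int

type_synonym elt = "basis \<Rightarrow> complex"

definition supp :: "elt \<Rightarrow> basis set" where
  "supp x = {b. x b \<noteq> 0}"

definition carrierV :: "elt set" where
  "carrierV = {x. finite (supp x)}"

definition e :: "basis \<Rightarrow> elt" where
  "e b = (\<lambda>c. if c = b then 1 else 0)"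

definition parity :: "basis \<Rightarrow> nat" where
  "parity b = (case b of L _ \<Rightarrow> 0 | I _ \<Rightarrow> 0 | G _ \<Rightarrow> 1 | H _ \<Rightarrow> 1)"

definition idx :: "basis \<Rightarrow> int" where
  "idx b = (case b of L m \<Rightarrow> m | I m \<Rightarrow> m | G p \<Rightarrow> p | H p \<Rightarrow> p)"

definition addv :: "elt \<Rightarrow> elt \<Rightarrow> elt" (infixl "\<oplus>" 65) where
  "addv x y = (\<lambda>b. x b + y b)"

definition scal :: "complex \<Rightarrow> elt \<Rightarrow> elt" where
  "scal c x = (\<lambda>b. c * x b)"

fun brb :: "complex \<Rightarrow> basis \<Rightarrow> basis \<Rightarrow> elt" where
  "brb lam (L m) (L n) = scal (of_int (m - n)) (e (L (m + n)))"
| "brb lam (L m) (I n) = scal (of_int (m - n)) (e (I (m + n)))"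
| "brb lam (I n) (L m) = scal (- of_int (m - n)) (e (I (m + n)))"
| "brb lam (L m) (H p) = scal (of_int m / 2 - of_int p) (e (H (m + p)))"
| "brb lam (H p) (L m) = scal (- (of_int m / 2 - of_int p)) (e (H (m + p)))"
| "brb lam (L m) (G p) = scal (of_int m / 2 - of_int p) (e (G (m + p)))
                         \<oplus> scal (lam * of_int (m + 1)) (e (H (m + p)))"
| "brb lam (G p) (L m) = scal (- (of_int m / 2 - of_int p)) (e (G (m + p)))
                         \<oplus> scal (- (lam * of_int (m + 1))) (e (H (m + p)))"
| "brb lam (I m) (G p) = scal (of_int (m - 2 * p)) (e (H (m + p)))"
| "brb lam (G p) (I m) = scal (- of_int (m - 2 * p)) (e (H (m + p)))"
| "brb lam (G p) (G q) = e (I (p + q))"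
| "brb lam _ _ = (\<lambda>_. 0)"

definition bracket :: "complex \<Rightarrow> elt \<Rightarrow> elt \<Rightarrow> elt" where
  "bracket lam x y = (\<lambda>c. \<Sum>b1\<in>supp x. \<Sum>b2\<in>supp y. x b1 * y b2 * brb lam b1 b2 c)"

definition ad :: "complex \<Rightarrow> elt \<Rightarrow> elt \<Rightarrow> elt" where
  "ad lam x = bracket lam x"

definition dG :: "elt \<Rightarrow> elt" where
  "dG x = (\<lambda>c. case c of H p \<Rightarrow> x (G p) | _ \<Rightarrow> 0)"

definition dD :: "elt \<Rightarrow> elt" where
  "dD x = (\<lambda>c. case c of L _ \<Rightarrow> 0 | I _ \<Rightarrow> 2 * x c | G _ \<Rightarrow> x c | H _ \<Rightarrow> 3 * x c)"

definition is_linear :: "(elt \<Rightarrow> elt) \<Rightarrow> bool" where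
  "is_linear D \<longleftrightarrow> (\<forall>x\<in>carrierV. D x \<in> carrierV) \<and>
     (\<forall>x\<in>carrierV. \<forall>y\<in>carrierV. D (x \<oplus> y) = D x \<oplus> D y) \<and>
     (\<forall>c. \<forall>x\<in>carrierV. D (scal c x) = scal c (D x))"

definition of_parity :: "nat \<Rightarrow> elt \<Rightarrow> bool" where
  "of_parity a x \<longleftrightarrow> (\<forall>b. x b \<noteq> 0 \<longrightarrow> parity b = a)"

definition of_index :: "int \<Rightarrow> elt \<Rightarrow> bool" where
  "of_index q x \<longleftrightarrow> (\<forall>b. x b \<noteq> 0 \<longrightarrow> idx b = q)"

text \<open>Even superderivation (parity 0: the sign factor is 1, D preserves parity).\<close>
definition even_superder :: "complex \<Rightarrow> (elt \<Rightarrow> elt) \<Rightarrow> bool" where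
  "even_superder lam D \<longleftrightarrow> is_linear D \<and>
     (\<forall>a x. x \<in> carrierV \<longrightarrow> of_parity a x \<longrightarrow> of_parity a (D x)) \<and>
     (\<forall>x\<in>carrierV. \<forall>y\<in>carrierV.
        D (bracket lam x y) = bracket lam (D x) y \<oplus> bracket lam x (D y))"

definition has_degree :: "int \<Rightarrow> (elt \<Rightarrow> elt) \<Rightarrow> bool" where
  "has_degree r D \<longleftrightarrow> (\<forall>q x. x \<in> carrierV \<longrightarrow> of_index q x \<longrightarrow> of_index (q + r) (D x))"

end

theory Submission
  imports Defs
begin

text \<open>A degree-zero even superderivation D maps each basis vector into the span of the basis
  vectors of the same index and parity, so it is described by eight integer-indexed coefficient
  sequences. Applying the Leibniz rule to the brackets [L,L], [I,I], [L,I], [G,G], [I,G] and [L,G]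
  yields Witt-type functional equations forcing these sequences to be affine in the index, with
  four free parameters; the [L_0, G_0] bracket gives in addition lam * d = 0. The resulting
  coordinate formula is exactly that of a ad(L_0) + b ad(I_0) + c partial_G + d partial_D, and
  conversely that formula satisfies the Leibniz rule on basis vectors, hence everywhere by
  bilinearity. Evaluating at L_1 and G_0 shows the four maps are independent.\<close>

lemma e_apply [simp]: "e b c = (if c = b then 1 else 0)"
  by (simp add: e_def)

lemma scal_apply [simp]: "scal k x c = k * x c"
  by (simp add: scal_def)

lemma addv_apply [simp]: "(x \<oplus> y) c = x c + y c"
  by (simp add: addv_def)

lemma supp_e [simp]: "supp (e b) = {b}"
  by (auto simp: supp_def)

lemma e_in_carrierV [simp]: "e b \<in> carrierV"
  by (simp add: carrierV_def)

lemma zero_in_carrierV [simp]: "(\<lambda>_. 0) \<in> carrierV"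
  by (simp add: carrierV_def supp_def)

lemma scal_in_carrierV [simp]: "x \<in> carrierV \<Longrightarrow> scal k x \<in> carrierV"
  unfolding carrierV_def supp_def by (auto elim: finite_subset[rotated])

lemma addv_in_carrierV [simp]: "x \<in> carrierV \<Longrightarrow> y \<in> carrierV \<Longrightarrow> x \<oplus> y \<in> carrierV"
proof -
  assume "x \<in> carrierV" "y \<in> carrierV"
  moreover have "supp (x \<oplus> y) \<subseteq> supp x \<union> supp y"
    by (auto simp: supp_def)
  ultimately show ?thesis
    unfolding carrierV_def by (auto elim: finite_subset)
qed

lemma finite_supp: "x \<in> carrierV \<Longrightarrow> finite (supp x)"
  by (simp add: carrierV_def)

lemma sum_in_carrierV:
  assumes "finite K" "\<And>i. i \<in> K \<Longrightarrow> f i \<in> carrierV"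
  shows "(\<lambda>c. \<Sum>i\<in>K. k i * f i c) \<in> carrierV"
proof -
  have "supp (\<lambda>c. \<Sum>i\<in>K. k i * f i c) \<subseteq> (\<Union>i\<in>K. supp (f i))"
    by (auto simp: supp_def intro: ccontr dest: sum.neutral[rotated])
  moreover have "finite (\<Union>i\<in>K. supp (f i))"
    using assms by (auto simp: carrierV_def)
  ultimately show ?thesis
    unfolding carrierV_def by (auto elim: finite_subset)
qed

lemma elt_eq_sum_basis:
  assumes "x \<in> carrierV"
  shows "x = (\<lambda>c. \<Sum>b\<in>supp x. x b * e b c)"
proof
  fix c
  have "(\<Sum>b\<in>supp x. x b * e b c) = (\<Sum>b\<in>supp x. if c = b then x b else 0)"
    by (rule sum.cong) auto
  also have "\<dots> = x c"
    using assms by (simp add: finite_supp) (simp add: supp_def)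
  finally show "x c = (\<Sum>b\<in>supp x. x b * e b c)" by simp
qed

lemma sum_mult_indicator:
  assumes "finite S" "supp x \<subseteq> S"
  shows "(\<Sum>b\<in>S. x b * (if b = b0 then k else 0)) = k * x b0"
proof -
  have "(\<Sum>b\<in>S. x b * (if b = b0 then k else 0)) = (\<Sum>b\<in>S. if b = b0 then x b * k else 0)"
    by (rule sum.cong) auto
  also have "\<dots> = (if b0 \<in> S then x b0 * k else 0)"
    using assms(1) by (simp add: sum.delta')
  also have "\<dots> = k * x b0"
    using assms(2) by (auto simp: supp_def)
  finally show ?thesis .
qed

subsection \<open>Bilinearity of the bracket\<close>

lemma bracket_eq_sum_over_superset:
  assumes "finite S" "supp x \<subseteq> S" "finite T" "supp y \<subseteq> T"
  shows "bracket lam x y c = (\<Sum>b1\<in>S. \<Sum>b2\<in>T. x b1 * y b2 * brb lam b1 b2 c)"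
proof -
  have "(\<Sum>b1\<in>S. \<Sum>b2\<in>T. x b1 * y b2 * brb lam b1 b2 c)
      = (\<Sum>b1\<in>supp x. \<Sum>b2\<in>T. x b1 * y b2 * brb lam b1 b2 c)"
    by (rule sum.mono_neutral_right) (use assms in \<open>auto simp: supp_def\<close>)
  also have "\<dots> = (\<Sum>b1\<in>supp x. \<Sum>b2\<in>supp y. x b1 * y b2 * brb lam b1 b2 c)"
    by (rule sum.cong[OF refl], rule sum.mono_neutral_right) (use assms in \<open>auto simp: supp_def\<close>)
  finally show ?thesis by (simp add: bracket_def)
qed

lemma bracket_e_e [simp]: "bracket lam (e b1) (e b2) = brb lam b1 b2"
  by (rule ext) (simp add: bracket_def)

lemma bracket_e_right:
  assumes "finite S" "supp u \<subseteq> S"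
  shows "bracket lam u (e b) c = (\<Sum>b'\<in>S. u b' * brb lam b' b c)"
  by (subst bracket_eq_sum_over_superset[OF assms, of "{b}"]) auto

lemma bracket_e_left:
  assumes "finite S" "supp u \<subseteq> S"
  shows "bracket lam (e b) u c = (\<Sum>b'\<in>S. u b' * brb lam b b' c)"
  by (subst bracket_eq_sum_over_superset[OF _ _ assms, of "{b}"]) auto

lemma bracket_sum_left:
  assumes "finite K" "\<And>i. i \<in> K \<Longrightarrow> f i \<in> carrierV" "y \<in> carrierV"
  shows "bracket lam (\<lambda>c. \<Sum>i\<in>K. k i * f i c) y c = (\<Sum>i\<in>K. k i * bracket lam (f i) y c)"
proof -
  define S where "S = (\<Union>i\<in>K. supp (f i))"
  have S: "finite S" using assms by (auto simp: S_def carrierV_def)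
  have supp_sum: "supp (\<lambda>c. \<Sum>i\<in>K. k i * f i c) \<subseteq> S"
    by (auto simp: supp_def S_def intro: ccontr dest: sum.neutral[rotated])
  have "bracket lam (\<lambda>c. \<Sum>i\<in>K. k i * f i c) y c
     = (\<Sum>b1\<in>S. \<Sum>b2\<in>supp y. (\<Sum>i\<in>K. k i * f i b1) * y b2 * brb lam b1 b2 c)"
    by (rule bracket_eq_sum_over_superset[OF S supp_sum]) (use assms in \<open>auto simp: finite_supp\<close>)
  also have "\<dots> = (\<Sum>i\<in>K. k i * (\<Sum>b1\<in>S. \<Sum>b2\<in>supp y. f i b1 * y b2 * brb lam b1 b2 c))"
    by (simp add: sum_distrib_left sum_distrib_right sum.swap[of _ K] mult.assoc)
  also have "\<dots> = (\<Sum>i\<in>K. k i * bracket lam (f i) y c)"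
    by (rule sum.cong[OF refl], subst bracket_eq_sum_over_superset[OF S _ _ order_refl])
       (use assms in \<open>auto simp: S_def finite_supp\<close>)
  finally show ?thesis .
qed

lemma bracket_sum_right:
  assumes "finite K" "\<And>i. i \<in> K \<Longrightarrow> f i \<in> carrierV" "x \<in> carrierV"
  shows "bracket lam x (\<lambda>c. \<Sum>i\<in>K. k i * f i c) c = (\<Sum>i\<in>K. k i * bracket lam x (f i) c)"
proof -
  define S where "S = (\<Union>i\<in>K. supp (f i))"
  have S: "finite S" using assms by (auto simp: S_def carrierV_def)
  have supp_sum: "supp (\<lambda>c. \<Sum>i\<in>K. k i * f i c) \<subseteq> S"
    by (auto simp: supp_def S_def intro: ccontr dest: sum.neutral[rotated])
  have "bracket lam x (\<lambda>c. \<Sum>i\<in>K. k i * f i c) c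
     = (\<Sum>b1\<in>supp x. \<Sum>b2\<in>S. x b1 * (\<Sum>i\<in>K. k i * f i b2) * brb lam b1 b2 c)"
    by (rule bracket_eq_sum_over_superset[OF _ _ S supp_sum]) (use assms in \<open>auto simp: finite_supp\<close>)
  also have "\<dots> = (\<Sum>i\<in>K. k i * (\<Sum>b1\<in>supp x. \<Sum>b2\<in>S. x b1 * f i b2 * brb lam b1 b2 c))"
    by (simp add: sum_distrib_left sum_distrib_right sum.swap[of _ K] mult.assoc mult.left_commute)
  also have "\<dots> = (\<Sum>i\<in>K. k i * bracket lam x (f i) c)"
    by (rule sum.cong[OF refl], subst bracket_eq_sum_over_superset[OF _ order_refl S])
       (use assms in \<open>auto simp: S_def finite_supp\<close>)
  finally show ?thesis .
qed

definition basis_of_index :: "int \<Rightarrow> basis set" where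
  "basis_of_index k = {L k, I k, G k, H k}"

lemma finite_basis_of_index [simp]: "finite (basis_of_index k)"
  by (simp add: basis_of_index_def)

lemma mem_basis_of_index_idx: "b \<in> basis_of_index (idx b)"
  by (cases b) (auto simp: basis_of_index_def idx_def)

lemma idx_of_mem_basis_of_index: "b \<in> basis_of_index k \<Longrightarrow> idx b = k"
  by (auto simp: basis_of_index_def idx_def)

lemma brb_in_carrierV [simp]: "brb lam b1 b2 \<in> carrierV"
proof -
  have "supp (brb lam b1 b2) \<subseteq> basis_of_index (idx b1 + idx b2)"
    by (cases b1; cases b2) (auto simp: supp_def basis_of_index_def idx_def split: if_splits)
  then show ?thesis
    unfolding carrierV_def by (auto elim: finite_subset)
qed

lemma bracket_eq_sum_brb:
  "bracket lam x y = (\<lambda>c. \<Sum>b1\<in>supp x. x b1 * (\<lambda>c. \<Sum>b2\<in>supp y. y b2 * brb lam b1 b2 c) c)"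
  by (simp add: bracket_def sum_distrib_left mult.assoc)

lemma bracket_in_carrierV:
  assumes "x \<in> carrierV" "y \<in> carrierV"
  shows "bracket lam x y \<in> carrierV"
  unfolding bracket_eq_sum_brb using assms
  by (intro sum_in_carrierV) (auto intro!: sum_in_carrierV simp: finite_supp)

lemma linear_add: "is_linear D \<Longrightarrow> x \<in> carrierV \<Longrightarrow> y \<in> carrierV \<Longrightarrow> D (x \<oplus> y) = D x \<oplus> D y"
  by (simp add: is_linear_def)

lemma linear_scal: "is_linear D \<Longrightarrow> x \<in> carrierV \<Longrightarrow> D (scal k x) = scal k (D x)"
  by (simp add: is_linear_def)

lemma linear_in_carrierV: "is_linear D \<Longrightarrow> x \<in> carrierV \<Longrightarrow> D x \<in> carrierV"
  by (simp add: is_linear_def)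

lemma linear_zero:
  assumes "is_linear D"
  shows "D (\<lambda>_. 0) = (\<lambda>_. 0)"
proof -
  have "scal 0 (\<lambda>_. 0) = (\<lambda>_. 0::complex)" "scal 0 (D (\<lambda>_. 0)) = (\<lambda>_. 0)"
    by (simp_all add: fun_eq_iff)
  then show ?thesis
    using linear_scal[OF assms zero_in_carrierV, of 0] by simp
qed

lemma linear_sum:
  assumes D: "is_linear D" and "finite K" and "\<forall>i\<in>K. f i \<in> carrierV"
  shows "D (\<lambda>c. \<Sum>i\<in>K. k i * f i c) = (\<lambda>c. \<Sum>i\<in>K. k i * D (f i) c)"
  using assms(2,3)
proof (induction K rule: finite_induct)
  case empty
  then show ?case using linear_zero[OF D] by simp
next
  case (insert j K)
  have "(\<lambda>c. \<Sum>i\<in>insert j K. k i * f i c) = scal (k j) (f j) \<oplus> (\<lambda>c. \<Sum>i\<in>K. k i * f i c)"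
    using insert by (auto simp: fun_eq_iff)
  moreover have "(\<lambda>c. \<Sum>i\<in>K. k i * f i c) \<in> carrierV" "scal (k j) (f j) \<in> carrierV"
    using insert by (auto intro: sum_in_carrierV scal_in_carrierV)
  ultimately have "D (\<lambda>c. \<Sum>i\<in>insert j K. k i * f i c)
      = D (scal (k j) (f j)) \<oplus> D (\<lambda>c. \<Sum>i\<in>K. k i * f i c)"
    by (simp add: linear_add[OF D])
  then show ?case
    using insert by (simp add: linear_scal[OF D] fun_eq_iff)
qed

lemma linear_eq_sum_basis:
  assumes D: "is_linear D" and x: "x \<in> carrierV"
  shows "D x = (\<lambda>c. \<Sum>b\<in>supp x. x b * D (e b) c)"
  using linear_sum[OF D finite_supp[OF x], of e x] elt_eq_sum_basis[OF x] by (simp del: e_apply)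

lemma linear_eqI_basis:
  assumes "is_linear D" "is_linear D'" "\<And>b. D (e b) = D' (e b)" "x \<in> carrierV"
  shows "D x = D' x"
  using linear_eq_sum_basis[OF assms(1,4)] linear_eq_sum_basis[OF assms(2,4)] assms(3) by simp

lemma derivation_of_basis:
  assumes F: "is_linear F"
    and basis: "\<And>b1 b2. F (brb lam b1 b2) = bracket lam (F (e b1)) (e b2) \<oplus> bracket lam (e b1) (F (e b2))"
    and x: "x \<in> carrierV" and y: "y \<in> carrierV"
  shows "F (bracket lam x y) = bracket lam (F x) y \<oplus> bracket lam x (F y)"
proof (rule ext)
  fix z
  define xs where "xs = (\<lambda>c. \<Sum>b1\<in>supp x. x b1 * e b1 c)"
  define ys where "ys = (\<lambda>c. \<Sum>b2\<in>supp y. y b2 * e b2 c)"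
  have y_eq: "y = ys"
    unfolding ys_def by (fact elt_eq_sum_basis[OF y])
  have "bracket lam x (F y) z = bracket lam xs (F y) z"
    unfolding xs_def using elt_eq_sum_basis[OF x] by metis
  have Fe: "F (e b) \<in> carrierV" for b
    using linear_in_carrierV[OF F] by simp
  have "F (bracket lam x y) z = (\<Sum>b1\<in>supp x. x b1 * (\<Sum>b2\<in>supp y. y b2 * F (brb lam b1 b2) z))"
    unfolding bracket_eq_sum_brb
    by (simp add: linear_sum[OF F] sum_in_carrierV finite_supp x y)
  also have "\<dots> = (\<Sum>b1\<in>supp x. x b1 * (\<Sum>b2\<in>supp y. y b2 * bracket lam (F (e b1)) (e b2) z))
       + (\<Sum>b1\<in>supp x. x b1 * (\<Sum>b2\<in>supp y. y b2 * bracket lam (e b1) (F (e b2)) z))"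
    by (simp add: basis ring_distribs sum.distrib)
  also have "(\<Sum>b1\<in>supp x. x b1 * (\<Sum>b2\<in>supp y. y b2 * bracket lam (F (e b1)) (e b2) z))
       = (\<Sum>b1\<in>supp x. x b1 * bracket lam (F (e b1)) ys z)"
    unfolding ys_def by (simp add: bracket_sum_right finite_supp y Fe del: e_apply)
  also have "\<dots> = bracket lam (F x) y z"
    by (simp add: linear_eq_sum_basis[OF F x] bracket_sum_left finite_supp x y Fe flip: y_eq)
  also have "(\<Sum>b1\<in>supp x. x b1 * (\<Sum>b2\<in>supp y. y b2 * bracket lam (e b1) (F (e b2)) z))
       = (\<Sum>b1\<in>supp x. x b1 * bracket lam (e b1) (F y) z)"
    by (simp add: linear_eq_sum_basis[OF F y] bracket_sum_right finite_supp y Fe)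
  also have "\<dots> = bracket lam x (F y) z"
    unfolding \<open>bracket lam x (F y) z = bracket lam xs (F y) z\<close> xs_def
    by (simp add: bracket_sum_left finite_supp x linear_in_carrierV[OF F y] del: e_apply)
  finally show "F (bracket lam x y) z = (bracket lam (F x) y \<oplus> bracket lam x (F y)) z"
    by simp
qed

subsection \<open>The explicit degree-zero superderivations\<close>

text \<open>Coordinates of a ad(L_0) + b ad(I_0) + c partial_G + d partial_D.\<close>
definition der_formula :: "complex \<Rightarrow> complex \<Rightarrow> complex \<Rightarrow> complex \<Rightarrow> complex \<Rightarrow> elt \<Rightarrow> elt" where
  "der_formula lam a b c d y = (\<lambda>z. case z of
      L n \<Rightarrow> - a * of_int n * y (L n)
    | I n \<Rightarrow> (2 * d - a * of_int n) * y (I n) - b * of_int n * y (L n)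
    | G p \<Rightarrow> (d - a * of_int p) * y (G p)
    | H p \<Rightarrow> (3 * d - a * of_int p) * y (H p) + (a * lam - 2 * b * of_int p + c) * y (G p))"

lemma der_formula_sum:
  "der_formula lam a b c d (\<lambda>z. \<Sum>i\<in>K. k i * f i z) = (\<lambda>z. \<Sum>i\<in>K. k i * der_formula lam a b c d (f i) z)"
  by (rule ext, simp add: der_formula_def split: basis.split)
     (simp add: sum_distrib_left sum_negf sum_subtractf sum.distrib algebra_simps)

lemma der_formula_nonzero_imp:
  assumes "der_formula lam a b c d y z \<noteq> 0"
  shows "\<exists>b'. y b' \<noteq> 0 \<and> parity b' = parity z \<and> idx b' = idx z"
  using assms
  by (cases z; cases "y z = 0") (fastforce simp: der_formula_def parity_def idx_def)+

lemma supp_der_formula_e: "supp (der_formula lam a b c d (e b')) \<subseteq> basis_of_index (idx b')"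
  using der_formula_nonzero_imp[of lam a b c d "e b'"] mem_basis_of_index_idx
  by (fastforce simp: supp_def split: if_splits)

lemma der_formula_linear: "is_linear (der_formula lam a b c d)"
  unfolding is_linear_def
proof (intro conjI ballI allI)
  fix x
  assume x: "x \<in> carrierV"
  have "der_formula lam a b c d (e b') \<in> carrierV" for b'
    unfolding carrierV_def by (simp add: finite_subset[OF supp_der_formula_e])
  then show "der_formula lam a b c d x \<in> carrierV"
    by (subst elt_eq_sum_basis[OF x]) (simp add: der_formula_sum sum_in_carrierV finite_supp x del: e_apply)
next
  fix x y :: elt
  show "der_formula lam a b c d (x \<oplus> y) = der_formula lam a b c d x \<oplus> der_formula lam a b c d y"
    by (rule ext) (simp add: der_formula_def split: basis.split; simp add: algebra_simps)
next
  fix k x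
  show "der_formula lam a b c d (scal k x) = scal k (der_formula lam a b c d x)"
    by (rule ext) (simp add: der_formula_def split: basis.split; simp add: algebra_simps)
qed

text \<open>The term lam (m + 1) H_(m+p) of [L_m, G_p] is scaled by 3d on the left but by d on the
  right, which is why partial_D is a derivation only for lam = 0.\<close>
lemma der_formula_brb:
  assumes "lam \<noteq> 0 \<longrightarrow> d = 0"
  shows "der_formula lam a b c d (brb lam b1 b2)
    = bracket lam (der_formula lam a b c d (e b1)) (e b2) \<oplus> bracket lam (e b1) (der_formula lam a b c d (e b2))"
proof (rule ext)
  fix z
  have "der_formula lam a b c d (brb lam b1 b2) z
      = (\<Sum>b'\<in>basis_of_index (idx b1). der_formula lam a b c d (e b1) b' * brb lam b' b2 z)
      + (\<Sum>b'\<in>basis_of_index (idx b2). der_formula lam a b c d (e b2) b' * brb lam b1 b' z)"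
    using assms
    by (cases b1; cases b2; cases z)
       ((simp_all add: der_formula_def basis_of_index_def idx_def), (auto simp: field_simps))
  then show "der_formula lam a b c d (brb lam b1 b2) z
    = (bracket lam (der_formula lam a b c d (e b1)) (e b2) \<oplus> bracket lam (e b1) (der_formula lam a b c d (e b2))) z"
    by (simp add: bracket_e_right[OF _ supp_der_formula_e] bracket_e_left[OF _ supp_der_formula_e])
qed

lemma der_formula_even_superder:
  assumes "lam \<noteq> 0 \<longrightarrow> d = 0"
  shows "even_superder lam (der_formula lam a b c d)"
  unfolding even_superder_def of_parity_def
  using der_formula_linear derivation_of_basis[OF der_formula_linear der_formula_brb[OF assms]]
    der_formula_nonzero_imp
  by metis

lemma der_formula_has_degree_0: "has_degree 0 (der_formula lam a b c d)"
  unfolding has_degree_def of_index_def using der_formula_nonzero_imp by fastforce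

lemma coeffs_eq_0_of_der_formula_eq_0:
  assumes "\<forall>x\<in>carrierV. der_formula lam a b c d x = (\<lambda>_. 0)"
  shows "a = 0 \<and> b = 0 \<and> c = 0 \<and> d = 0"
proof -
  have "der_formula lam a b c d (e (L 1)) (L 1) = 0" "der_formula lam a b c d (e (L 1)) (I 1) = 0"
    "der_formula lam a b c d (e (G 0)) (G 0) = 0" "der_formula lam a b c d (e (G 0)) (H 0) = 0"
    using assms by simp_all
  then show ?thesis
    by (simp add: der_formula_def)
qed

lemma combination_eq_der_formula:
  assumes "x \<in> carrierV"
  shows "scal a (ad lam (e (L 0)) x) \<oplus> scal b (ad lam (e (I 0)) x) \<oplus> scal c (dG x) \<oplus> scal d (dD x)
       = der_formula lam a b c d x"
proof -
  have brb_L0: "brb lam (L 0) b' z = (case z of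
        L n \<Rightarrow> (if b' = L n then - of_int n else 0)
      | I n \<Rightarrow> (if b' = I n then - of_int n else 0)
      | G p \<Rightarrow> (if b' = G p then - of_int p else 0)
      | H p \<Rightarrow> (if b' = H p then - of_int p else 0) + (if b' = G p then lam else 0))" for b' z
    by (cases b'; cases z) auto
  have brb_I0: "brb lam (I 0) b' z = (case z of
        L n \<Rightarrow> 0
      | I n \<Rightarrow> (if b' = L n then - of_int n else 0)
      | G p \<Rightarrow> 0
      | H p \<Rightarrow> (if b' = G p then - 2 * of_int p else 0))" for b' z
    by (cases b'; cases z) auto
  have ad_e: "ad lam (e b0) x z = (\<Sum>b'\<in>supp x. x b' * brb lam b0 b' z)" for b0 z
    by (simp add: ad_def bracket_def)
  show ?thesis
    using finite_supp[OF assms]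
    by (auto simp: fun_eq_iff ad_e brb_L0 brb_I0 sum_mult_indicator ring_distribs sum.distrib
        dG_def dD_def der_formula_def split: basis.split)
qed

lemma even_superder_cong:
  assumes "\<forall>x\<in>carrierV. D x = F x" "even_superder lam F"
  shows "even_superder lam D"
  using assms bracket_in_carrierV addv_in_carrierV scal_in_carrierV
  by (simp add: even_superder_def is_linear_def)

lemma has_degree_cong:
  assumes "\<forall>x\<in>carrierV. D x = F x" "has_degree r F"
  shows "has_degree r D"
  using assms by (simp add: has_degree_def)

subsection \<open>Functional equations on the integers\<close>

lemma int_affine_of_constant_step:
  fixes g :: "int \<Rightarrow> complex"
  assumes "\<And>p. g (p + 1) = g p + k"
  shows "g p = g 0 + of_int p * k"
proof (induction p rule: int_induct[where k = 0])
  case base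
  then show ?case by simp
next
  case (step1 i)
  then show ?case using assms[of i] by (simp add: algebra_simps)
next
  case (step2 i)
  then show ?case using assms[of "i - 1"] by (simp add: algebra_simps)
qed

lemma off_diagonal_additive_imp_linear:
  fixes f :: "int \<Rightarrow> complex"
  assumes "\<And>m n. of_int (m - n) * f (m + n) = of_int (m - n) * (f m + f n)"
  shows "f m = of_int m * f 1"
proof -
  have add: "f (m + n) = f m + f n" if "m \<noteq> n" for m n
    using assms[of m n] that by simp
  have f0: "f 0 = 0"
    using add[of 1 0] by simp
  have "f (-2) = - f 2"
    using add[of 2 "-2"] f0 by (simp add: eq_neg_iff_add_eq_0 add.commute)
  then have f2: "f 2 = 2 * f 1"
    using add[of 4 "-2"] add[of 3 1] add[of 2 1] by simp
  have "f (p + 1) = f p + f 1" for p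
    using add[of p 1] f2 by (cases "p = 1") simp_all
  then show ?thesis
    using int_affine_of_constant_step[of f "f 1" m] f0 by simp
qed

subsection \<open>Every degree-zero even superderivation is of the explicit form\<close>

locale degree0_even_superder =
  fixes lam :: complex and D :: "elt \<Rightarrow> elt"
  assumes even_superder: "even_superder lam D" and degree_0: "has_degree 0 D"
begin

lemma linear: "is_linear D"
  using even_superder by (simp add: even_superder_def)

lemma derivation:
  "x \<in> carrierV \<Longrightarrow> y \<in> carrierV \<Longrightarrow> D (bracket lam x y) = bracket lam (D x) y \<oplus> bracket lam x (D y)"
  using even_superder by (simp add: even_superder_def)

lemmas D_linear_simps = linear_scal[OF linear] linear_add[OF linear] linear_zero[OF linear]

lemma D_e_eq_0_of_parity: "parity z \<noteq> parity b \<Longrightarrow> D (e b) z = 0"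
  using even_superder unfolding even_superder_def of_parity_def
  by (metis e_apply e_in_carrierV zero_neq_one)

lemma D_e_eq_0_of_idx: "idx z \<noteq> idx b \<Longrightarrow> D (e b) z = 0"
  using degree_0 unfolding has_degree_def of_index_def
  by (metis add_0_right e_apply e_in_carrierV zero_neq_one)

lemma D_e_parity_mismatch [simp]:
  "D (e (L m)) (G p) = 0" "D (e (L m)) (H p) = 0" "D (e (I m)) (G p) = 0" "D (e (I m)) (H p) = 0"
  "D (e (G m)) (L p) = 0" "D (e (G m)) (I p) = 0" "D (e (H m)) (L p) = 0" "D (e (H m)) (I p) = 0"
  by (simp_all add: D_e_eq_0_of_parity parity_def)

lemma D_brb:
  "D (brb lam b1 b2) z = (\<Sum>b'\<in>basis_of_index (idx b1). D (e b1) b' * brb lam b' b2 z)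
     + (\<Sum>b'\<in>basis_of_index (idx b2). D (e b2) b' * brb lam b1 b' z)"
proof -
  have supp: "supp (D (e b)) \<subseteq> basis_of_index (idx b)" for b
    using D_e_eq_0_of_idx mem_basis_of_index_idx by (auto simp: supp_def) metis
  show ?thesis
    using derivation[of "e b1" "e b2"]
    by (simp add: bracket_e_right[OF _ supp] bracket_e_left[OF _ supp])
qed

lemma D_L_L: "D (e (L m)) (L m) = of_int m * D (e (L 1)) (L 1)"
proof (rule off_diagonal_additive_imp_linear[where f = "\<lambda>m. D (e (L m)) (L m)"])
  fix m n :: int
  show "of_int (m - n) * D (e (L (m + n))) (L (m + n))
      = of_int (m - n) * (D (e (L m)) (L m) + D (e (L n)) (L n))"
    using D_brb[of "L m" "L n" "L (m + n)"]
    by (simp add: basis_of_index_def idx_def D_linear_simps algebra_simps)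
qed

lemma D_L_I: "D (e (L m)) (I m) = of_int m * D (e (L 1)) (I 1)"
proof (rule off_diagonal_additive_imp_linear[where f = "\<lambda>m. D (e (L m)) (I m)"])
  fix m n :: int
  show "of_int (m - n) * D (e (L (m + n))) (I (m + n))
      = of_int (m - n) * (D (e (L m)) (I m) + D (e (L n)) (I n))"
    using D_brb[of "L m" "L n" "I (m + n)"]
    by (simp add: basis_of_index_def idx_def D_linear_simps algebra_simps)
qed

lemma D_I_L: "D (e (I m)) (L m) = 0"
proof -
  have antiadd: "D (e (I m)) (L m) + D (e (I n)) (L n) = 0" if "m \<noteq> n" for m n
  proof -
    have "of_int (m - n) * (D (e (I m)) (L m) + D (e (I n)) (L n)) = 0"
      using D_brb[of "I m" "I n" "I (m + n)"]
      by (simp add: basis_of_index_def idx_def D_linear_simps algebra_simps)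
    then show ?thesis
      using that by simp
  qed
  let ?c = "\<lambda>m. D (e (I m)) (L m)"
  have "2 * ?c m = (?c m + ?c (m + 1)) - (?c (m + 1) + ?c (m + 2)) + (?c m + ?c (m + 2))"
    by (simp add: algebra_simps)
  also have "\<dots> = 0"
    using antiadd[of m "m + 1"] antiadd[of "m + 1" "m + 2"] antiadd[of m "m + 2"] by simp
  finally show ?thesis
    by simp
qed

lemma D_I_I: "D (e (I m)) (I m) = D (e (I 0)) (I 0) + of_int m * D (e (L 1)) (L 1)"
proof (cases "m = 0")
  case False
  have "of_int m * D (e (I m)) (I m) = of_int m * (D (e (L m)) (L m) + D (e (I 0)) (I 0))"
    using D_brb[of "L m" "I 0" "I m"]
    by (simp add: basis_of_index_def idx_def D_linear_simps algebra_simps)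
  then show ?thesis
    using False D_L_L[of m] by simp
qed simp

lemma D_G_G: "D (e (G p)) (G p) = D (e (I 0)) (I 0) / 2 + of_int p * D (e (L 1)) (L 1)"
proof -
  have "D (e (I (p + p))) (I (p + p)) = 2 * D (e (G p)) (G p)"
    using D_brb[of "G p" "G p" "I (p + p)"]
    by (simp add: basis_of_index_def idx_def D_linear_simps)
  then show ?thesis
    using D_I_I[of "p + p"] by (simp add: field_simps)
qed

lemma D_H_G: "D (e (H k)) (G k) = 0"
proof -
  have "of_int (m - 2 * p) * D (e (H (m + p))) (G (m + p)) = 0" for m p
    using D_brb[of "I m" "G p" "G (m + p)"]
    by (simp add: basis_of_index_def idx_def D_linear_simps D_I_L)
  from this[of k 0] this[of "-1" 1] show ?thesis
    by (cases "k = 0") simp_all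
qed

lemma D_H_H: "D (e (H k)) (H k) = 3 * D (e (I 0)) (I 0) / 2 + of_int k * D (e (L 1)) (L 1)"
proof -
  have "of_int (m - 2 * p) * D (e (H (m + p))) (H (m + p))
      = of_int (m - 2 * p) * (D (e (I m)) (I m) + D (e (G p)) (G p))" for m p
    using D_brb[of "I m" "G p" "H (m + p)"]
    by (simp add: basis_of_index_def idx_def D_linear_simps D_I_L algebra_simps)
  note eq = this
  have "k \<noteq> 0 \<Longrightarrow> D (e (H k)) (H k) = D (e (I k)) (I k) + D (e (G 0)) (G 0)"
    using mult_left_cancel[THEN iffD1, OF _ eq[of k 0]] by simp
  moreover have "D (e (H 0)) (H 0) = D (e (I 2)) (I 2) + D (e (G (-2))) (G (-2))"
    using mult_left_cancel[THEN iffD1, OF _ eq[of 2 "-2"]] by simp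
  ultimately show ?thesis
    using D_I_I[of k] D_I_I[of 2] D_G_G[of 0] D_G_G[of "-2"]
    by (cases "k = 0") (simp_all add: field_simps)
qed

text \<open>For m = -1 the term lam (m + 1) H_(m+p) of [L_m, G_p] vanishes, which turns the Leibniz
  rule into a recursion in p free of lam.\<close>
lemma D_G_H: "D (e (G p)) (H p) = D (e (G 0)) (H 0) + 2 * of_int p * D (e (L 1)) (I 1)"
proof -
  have "D (e (G (p + 1))) (H (p + 1)) = D (e (G p)) (H p) + 2 * D (e (L 1)) (I 1)" for p
  proof -
    define X :: complex where "X = - 1 / 2 - of_int (p + 1)"
    have "X \<noteq> 0"
    proof
      assume "X = 0"
      then have "of_int (2 * p + 3) = (0 :: complex)"
        by (simp add: X_def field_simps)
      then show False
        by (simp only: of_int_eq_0_iff) presburger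
    qed
    have eq: "X * D (e (G p)) (H p)
        = of_int (-1 - 2 * (p + 1)) * D (e (L (-1))) (I (-1)) + X * D (e (G (p + 1))) (H (p + 1))"
      using D_brb[of "L (-1)" "G (p + 1)" "H p"] unfolding X_def
      by (simp add: basis_of_index_def idx_def D_linear_simps algebra_simps)
    have two_X: "of_int (-1 - 2 * (p + 1)) = 2 * X"
      by (simp add: X_def)
    have "X * (D (e (G (p + 1))) (H (p + 1)) - D (e (G p)) (H p) - 2 * D (e (L 1)) (I 1)) = 0"
      using eq D_L_I[of "-1"] unfolding two_X by (simp add: algebra_simps)
    with \<open>X \<noteq> 0\<close> have "D (e (G (p + 1))) (H (p + 1)) - D (e (G p)) (H p) - 2 * D (e (L 1)) (I 1) = 0"
      by simp
    then show ?thesis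
      by (simp add: algebra_simps)
  qed
  from int_affine_of_constant_step[of "\<lambda>p. D (e (G p)) (H p)" "2 * D (e (L 1)) (I 1)" p, OF this]
  show ?thesis
    by simp
qed

lemma lam_mult_D_I0: "lam * D (e (I 0)) (I 0) = 0"
proof -
  have "lam * D (e (H 0)) (H 0) = lam * D (e (G 0)) (G 0)"
    using D_brb[of "L 0" "G 0" "H 0"]
    by (simp add: basis_of_index_def idx_def D_linear_simps D_L_L[of 0] algebra_simps)
  then show ?thesis
    by (simp add: D_H_H[of 0] D_G_G[of 0] field_simps)
qed

lemma D_e_eq_der_formula:
  "D (e b) = der_formula lam (- D (e (L 1)) (L 1)) (- D (e (L 1)) (I 1))
      (D (e (G 0)) (H 0) + lam * D (e (L 1)) (L 1)) (D (e (I 0)) (I 0) / 2) (e b)"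
proof (rule ext)
  fix z
  define F where "F = der_formula lam (- D (e (L 1)) (L 1)) (- D (e (L 1)) (I 1))
      (D (e (G 0)) (H 0) + lam * D (e (L 1)) (L 1)) (D (e (I 0)) (I 0) / 2)"
  have "D (e b) z = F (e b) z"
  proof (cases "idx z = idx b")
    case False
    have "z \<notin> supp (F (e b))"
      using False supp_der_formula_e idx_of_mem_basis_of_index unfolding F_def by blast
    with False show ?thesis
      by (simp add: supp_def D_e_eq_0_of_idx)
  next
    case True
    define k where "k = idx b"
    have "b \<in> basis_of_index k" "z \<in> basis_of_index k"
      using True mem_basis_of_index_idx unfolding k_def by metis+
    then show ?thesis
      unfolding basis_of_index_def F_def
      by (elim insertE; simp add: der_formula_def D_L_L[of k] D_L_I[of k] D_I_L
          D_I_I[of k] D_G_G[of k] D_H_G D_H_H[of k] D_G_H[of k] algebra_simps)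
  qed
  then show "D (e b) z = der_formula lam (- D (e (L 1)) (L 1)) (- D (e (L 1)) (I 1))
      (D (e (G 0)) (H 0) + lam * D (e (L 1)) (L 1)) (D (e (I 0)) (I 0) / 2) (e b) z"
    by (simp add: F_def)
qed

lemma ex_der_formula:
  "\<exists>a b c d. (lam \<noteq> 0 \<longrightarrow> d = 0) \<and> (\<forall>x\<in>carrierV. D x = der_formula lam a b c d x)"
proof (intro exI conjI)
  show "lam \<noteq> 0 \<longrightarrow> D (e (I 0)) (I 0) / 2 = 0"
    using lam_mult_D_I0 by auto
qed (use linear_eqI_basis[OF linear der_formula_linear D_e_eq_der_formula] in blast)

end

theorem lemma2p3:
  fixes lam :: complex
  shows "(\<forall>D. (even_superder lam D \<and> has_degree 0 D) \<longleftrightarrow>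
            (\<exists>a b c d. (lam \<noteq> 0 \<longrightarrow> d = 0) \<and>
               (\<forall>x\<in>carrierV. D x = scal a (ad lam (e (L 0)) x) \<oplus> scal b (ad lam (e (I 0)) x)
                                    \<oplus> scal c (dG x) \<oplus> scal d (dD x))))
       \<and> (\<forall>a b c d. (lam \<noteq> 0 \<longrightarrow> d = 0) \<longrightarrow>
            (\<forall>x\<in>carrierV. scal a (ad lam (e (L 0)) x) \<oplus> scal b (ad lam (e (I 0)) x)
                           \<oplus> scal c (dG x) \<oplus> scal d (dD x) = (\<lambda>_. 0)) \<longrightarrow>
            a = 0 \<and> b = 0 \<and> c = 0 \<and> d = 0)"
proof -
  have "even_superder lam D \<and> has_degree 0 D \<longleftrightarrow>
      (\<exists>a b c d. (lam \<noteq> 0 \<longrightarrow> d = 0) \<and> (\<forall>x\<in>carrierV. D x = der_formula lam a b c d x))" for D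
  proof
    assume "even_superder lam D \<and> has_degree 0 D"
    then interpret degree0_even_superder lam D
      by unfold_locales auto
    show "\<exists>a b c d. (lam \<noteq> 0 \<longrightarrow> d = 0) \<and> (\<forall>x\<in>carrierV. D x = der_formula lam a b c d x)"
      by (fact ex_der_formula)
  next
    assume "\<exists>a b c d. (lam \<noteq> 0 \<longrightarrow> d = 0) \<and> (\<forall>x\<in>carrierV. D x = der_formula lam a b c d x)"
    then obtain a b c d where "lam \<noteq> 0 \<longrightarrow> d = 0" "\<forall>x\<in>carrierV. D x = der_formula lam a b c d x"
      by blast
    then show "even_superder lam D \<and> has_degree 0 D"
      using der_formula_even_superder der_formula_has_degree_0 even_superder_cong has_degree_cong
      by metis
  qed
  moreover have "scal a (ad lam (e (L 0)) x) \<oplus> scal b (ad lam (e (I 0)) x) \<oplus> scal c (dG x) \<oplus> scal d (dD x)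
      = der_formula lam a b c d x" if "x \<in> carrierV" for a b c d x
    using that by (rule combination_eq_der_formula)
  ultimately show ?thesis
    using coeffs_eq_0_of_der_formula_eq_0 by (simp cong: ball_cong)
qed

end
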